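(* Consider the weighted case $d_i=\sqrt{n/(i(n-i))}$ for $i=1,\dots,n-1$. Fix $n\ge2$, any $u\in\{1,\dots,n-1\}$ and $\sigma^2>0$. Let $(\beta^*_{u,j})_{j\ge1}$ be a real sequence with $\frac1p\sum_{j=1}^p(\beta^*_{u,j})^2\to\bar\beta^2$, where $0<\bar\beta^2<\infty$. For each $p$, let $\beta^*\in\mathbb{R}^{(n-1)\times p}$ have only its $u$-th row nonzero, equal to $(\beta^*_{u,1},\dots,\beta^*_{u,p})$, let $W\in\mathbb{R}^{n\times p}$ have i.i.d. $N(0,\sigma^2)$ entries, and $\bar Y=\bar X\beta^*+W$. Then the probability that the first change-point $\hat u_p$ selected by the weighted group fused Lasso equals $u$ tends to $1$ as $p\to\infty$.
   Context: For positive weights $d_1,\dots,d_{n-1}$, $X$ is the $n\times(n-1)$ matrix with $X_{k,j}=d_j$ if $k>j$ and $0$ otherwise, and $\bar X$ is obtained from $X$ by centering each column to mean zero; explicitly $\bar X_{k,i}=(i/n-1)d_i$ for $k\le i$ and $\bar X_{k,i}=(i/n)d_i$ for $k>i$. The group fused Lasso on centered data $\bar Y\in\mathbb{R}^{n\times p}$ with parameter $\lambda>0$ is $\min_{\beta\in\mathbb{R}^{(n-1)\times p}}\frac12\|\bar Y-\bar X\beta\|^2+\lambda\sum_{i=1}^{n-1}\|\beta_{i,\bullet}\|$. The first change-point selected is $\hat u_p\in\arg\max_i\|(\bar X^\top\bar Y)_{i,\bullet}\|$ (the first row to become nonzero as $\lambda$ decreases), ties broken arbitrarily. *)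

theory Defs
  imports "HOL-Probability.Probability"
begin

text \<open>Indices: rows k in {1..n}, change-point columns i in {1..n-1}, data columns j in {1..p}.\<close>

definition gfl_weight :: "nat \<Rightarrow> nat \<Rightarrow> real" where
  "gfl_weight n i = sqrt (real n / (real i * (real n - real i)))"

definition Xbar :: "nat \<Rightarrow> (nat \<Rightarrow> real) \<Rightarrow> nat \<Rightarrow> nat \<Rightarrow> real" where
  "Xbar n d k i = (if k \<le> i then (real i / real n - 1) * d i else (real i / real n) * d i)"

definition XtY :: "nat \<Rightarrow> (nat \<Rightarrow> real) \<Rightarrow> (nat \<Rightarrow> nat \<Rightarrow> real) \<Rightarrow> nat \<Rightarrow> nat \<Rightarrow> real" where
  "XtY n d Y i j = (\<Sum>k=1..n. Xbar n d k i * Y k j)"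

definition row_norm_XtY :: "nat \<Rightarrow> nat \<Rightarrow> (nat \<Rightarrow> real) \<Rightarrow> (nat \<Rightarrow> nat \<Rightarrow> real) \<Rightarrow> nat \<Rightarrow> real" where
  "row_norm_XtY n p d Y i = sqrt (\<Sum>j=1..p. (XtY n d Y i j)\<^sup>2)"

text \<open>First selected change-point equals u (regardless of the tie-breaking rule):
  u is the unique maximiser of the row norms.\<close>
definition first_cp_is :: "nat \<Rightarrow> nat \<Rightarrow> (nat \<Rightarrow> real) \<Rightarrow> (nat \<Rightarrow> nat \<Rightarrow> real) \<Rightarrow> nat \<Rightarrow> bool" where
  "first_cp_is n p d Y u \<longleftrightarrow>
     (\<forall>i\<in>{1..n-1}. i \<noteq> u \<longrightarrow> row_norm_XtY n p d Y i < row_norm_XtY n p d Y u)"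

definition Ybar :: "nat \<Rightarrow> (nat \<Rightarrow> real) \<Rightarrow> nat \<Rightarrow> (nat \<Rightarrow> real) \<Rightarrow> (nat \<times> nat \<Rightarrow> real) \<Rightarrow> nat \<Rightarrow> nat \<Rightarrow> real" where
  "Ybar n d u b W k j = (\<Sum>i=1..n-1. Xbar n d k i * (if i = u then b j else 0)) + W (k, j)"

definition noise_measure :: "nat \<Rightarrow> nat \<Rightarrow> real \<Rightarrow> (nat \<times> nat \<Rightarrow> real) measure" where
  "noise_measure n p \<sigma> = PiM ({1..n} \<times> {1..p}) (\<lambda>_. density lborel (normal_density 0 \<sigma>))"

end

theory Submission
  imports Defs
begin

(* Write c_i for the i-th column of the centered design and
   Z_i = (Xbar^T Ybar)_{i,*}.  With the weights d_i = sqrt(n/(i(n-i))) every column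
   has unit norm, and gamma_i = <c_i, c_u> satisfies gamma_u = 1, gamma_i^2 < 1 for i ~= u.
   Column j of the data gives Z_{ij} = gamma_i b_j + <c_i, W_{*j}>, so
     |Z_u|^2 - |Z_i|^2 = sum_j D_j,
   where the "column contrasts" D_j are independent, E D_j = (1 - gamma_i^2) b_j^2 and
   Var D_j <= A b_j^2 + B with A, B independent of p.  Chebyshev's inequality bounds
   P(sum_j D_j <= 0) by (A S_p + B p) / ((1 - gamma_i^2) S_p)^2 = O(1/p), where
   S_p = sum_j b_j^2 ~ p beta^2.  A union bound over the n - 2 competitors i ~= u ends
   the proof. *)

section \<open>Square integrability, variances of sums and the second moment method\<close>

lemma abs_mult_le_sum_squares: "\<bar>a * b\<bar> \<le> a\<^sup>2 + (b::real)\<^sup>2"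
proof -
  have "0 \<le> (\<bar>a\<bar> - \<bar>b\<bar>)\<^sup>2" by simp
  then have "2 * (\<bar>a\<bar> * \<bar>b\<bar>) \<le> \<bar>a\<bar>\<^sup>2 + \<bar>b\<bar>\<^sup>2" by (simp add: power2_diff)
  moreover have "0 \<le> \<bar>a\<bar> * \<bar>b\<bar>" by simp
  ultimately show ?thesis unfolding abs_mult power2_abs by linarith
qed

lemma sq_add_le: "(x + y)\<^sup>2 \<le> 2 * x\<^sup>2 + 2 * (y::real)\<^sup>2"
proof -
  have "0 \<le> (x - y)\<^sup>2" by simp
  then show ?thesis by (simp add: power2_sum power2_diff)
qed

lemma (in finite_measure) integrable_mult_sq:
  fixes f g :: "'a \<Rightarrow> real"
  assumes [measurable]: "f \<in> borel_measurable M" "g \<in> borel_measurable M"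
    and "integrable M (\<lambda>x. (f x)\<^sup>2)" "integrable M (\<lambda>x. (g x)\<^sup>2)"
  shows "integrable M (\<lambda>x. f x * g x)"
proof (rule Bochner_Integration.integrable_bound)
  show "integrable M (\<lambda>x. (f x)\<^sup>2 + (g x)\<^sup>2)" using assms by auto
  show "AE x in M. norm (f x * g x) \<le> norm ((f x)\<^sup>2 + (g x)\<^sup>2)"
    using abs_mult_le_sum_squares by auto
qed simp

lemma (in finite_measure) integrable_sq_add:
  fixes f g :: "'a \<Rightarrow> real"
  assumes [measurable]: "f \<in> borel_measurable M" "g \<in> borel_measurable M"
    and "integrable M (\<lambda>x. (f x)\<^sup>2)" "integrable M (\<lambda>x. (g x)\<^sup>2)"
  shows "integrable M (\<lambda>x. (f x + g x)\<^sup>2)"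
proof -
  have "integrable M (\<lambda>x. (f x)\<^sup>2 + (g x)\<^sup>2 + 2 * (f x * g x))"
    using integrable_mult_sq[OF assms] assms by auto
  then show ?thesis by (simp add: power2_sum mult.assoc)
qed

lemma (in finite_measure) integrable_sq_sum:
  fixes f :: "'i \<Rightarrow> 'a \<Rightarrow> real"
  assumes "finite J" "\<And>j. j \<in> J \<Longrightarrow> f j \<in> borel_measurable M"
    "\<And>j. j \<in> J \<Longrightarrow> integrable M (\<lambda>x. (f j x)\<^sup>2)"
  shows "integrable M (\<lambda>x. (\<Sum>j\<in>J. f j x)\<^sup>2)"
  using assms
proof (induction J rule: finite_induct)
  case empty then show ?case by simp
next
  case (insert a F)
  have "(\<lambda>x. \<Sum>j\<in>F. f j x) \<in> borel_measurable M"
    using insert by (intro borel_measurable_sum) auto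
  with insert show ?case by (simp add: integrable_sq_add)
qed

lemma (in prob_space) indep_vars_expectation_mult:
  fixes X :: "'i \<Rightarrow> 'a \<Rightarrow> real"
  assumes "indep_vars (\<lambda>_. borel) X J" "j \<in> J" "k \<in> J" "j \<noteq> k"
    and "integrable M (X j)" "integrable M (X k)"
  shows "expectation (\<lambda>x. X j x * X k x) = expectation (X j) * expectation (X k)"
proof -
  have "indep_vars (\<lambda>_. borel) X {j, k}"
    by (rule indep_vars_subset[OF assms(1)]) (use assms in auto)
  then have "expectation (\<lambda>x. \<Prod>i\<in>{j,k}. X i x) = (\<Prod>i\<in>{j,k}. expectation (X i))"
    by (intro indep_vars_lebesgue_integral) (use assms in auto)
  then show ?thesis using assms(4) by simp
qed

lemma (in prob_space) variance_sum_indep: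
  fixes Y :: "'i \<Rightarrow> 'a \<Rightarrow> real"
  assumes fin: "finite J" and ind: "indep_vars (\<lambda>_. borel) Y J"
    and sq: "\<And>j. j \<in> J \<Longrightarrow> integrable M (\<lambda>x. (Y j x)\<^sup>2)"
  shows "variance (\<lambda>x. \<Sum>j\<in>J. Y j x) = (\<Sum>j\<in>J. variance (Y j))"
proof -
  have meas[measurable]: "Y j \<in> borel_measurable M" if "j \<in> J" for j
    using ind that by (auto simp: indep_vars_def)
  have int: "integrable M (Y j)" if "j \<in> J" for j
    using square_integrable_imp_integrable[OF meas[OF that] sq[OF that]] .
  define C where "C j x = Y j x - expectation (Y j)" for j x
  have Csq: "integrable M (\<lambda>x. (C j x)\<^sup>2)" if "j \<in> J" for j
    unfolding C_def diff_conv_add_uminus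
    by (rule integrable_sq_add) (use that sq in auto)
  have Cint: "integrable M (C j)" if "j \<in> J" for j
    unfolding C_def using int[OF that] by auto
  have Cmean: "expectation (C j) = 0" if "j \<in> J" for j
    unfolding C_def using int[OF that] by (simp add: prob_space)
  have indC: "indep_vars (\<lambda>_. borel) C J"
    unfolding C_def by (rule indep_vars_compose2[OF ind]) auto
  have cross: "expectation (\<lambda>x. C j x * C k x) = (if j = k then variance (Y j) else 0)"
    if "j \<in> J" "k \<in> J" for j k
  proof (cases "j = k")
    case True then show ?thesis by (simp add: C_def power2_eq_square)
  next
    case False then show ?thesis
      using indep_vars_expectation_mult[OF indC that False Cint Cint] that Cmean by simp
  qed
  have Csq_prod: "integrable M (\<lambda>x. C j x * C k x)" if "j \<in> J" "k \<in> J" for j k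
    by (rule integrable_mult_sq) (use that Csq in \<open>auto simp: C_def\<close>)
  have "expectation (\<lambda>x. \<Sum>j\<in>J. Y j x) = (\<Sum>j\<in>J. expectation (Y j))"
    using int by (simp add: Bochner_Integration.integral_sum)
  then have "variance (\<lambda>x. \<Sum>j\<in>J. Y j x) = expectation (\<lambda>x. (\<Sum>j\<in>J. C j x)\<^sup>2)"
    by (simp add: C_def sum_subtractf)
  also have "\<dots> = expectation (\<lambda>x. \<Sum>j\<in>J. \<Sum>k\<in>J. C j x * C k x)"
    by (simp add: power2_eq_square sum_product)
  also have "\<dots> = (\<Sum>j\<in>J. \<Sum>k\<in>J. expectation (\<lambda>x. C j x * C k x))"
    using Csq_prod by (simp add: Bochner_Integration.integral_sum Bochner_Integration.integrable_sum)
  also have "\<dots> = (\<Sum>j\<in>J. variance (Y j))"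
    using fin by (simp add: cross sum.delta cong: sum.cong)
  finally show ?thesis .
qed

lemma (in prob_space) prob_nonpos_le_variance:
  fixes f :: "'a \<Rightarrow> real"
  assumes [measurable]: "f \<in> borel_measurable M"
    and "integrable M (\<lambda>x. (f x)\<^sup>2)" and pos: "expectation f > 0"
  shows "prob {x \<in> space M. f x \<le> 0} \<le> variance f / (expectation f)\<^sup>2"
proof -
  have "{x \<in> space M. f x \<le> 0} \<subseteq> {x \<in> space M. \<bar>f x - expectation f\<bar> \<ge> expectation f}"
    using pos by auto
  then have "prob {x \<in> space M. f x \<le> 0}
      \<le> prob {x \<in> space M. \<bar>f x - expectation f\<bar> \<ge> expectation f}"
    by (intro finite_measure_mono) measurable
  also have "\<dots> \<le> variance f / (expectation f)\<^sup>2"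
    by (rule Chebyshev_inequality) (use assms in auto)
  finally show ?thesis .
qed

lemma union_bound_tendsto:
  assumes fin: "finite I" and prob: "\<And>p. prob_space (M p)"
    and sets: "\<And>p i. i \<in> I \<Longrightarrow> B p i \<in> sets (M p)"
    and lim: "\<And>i. i \<in> I \<Longrightarrow> (\<lambda>p. measure (M p) (B p i)) \<longlonglongrightarrow> 0"
  shows "(\<lambda>p. measure (M p) (space (M p) - (\<Union>i\<in>I. B p i))) \<longlonglongrightarrow> 1"
proof -
  have lower: "1 - (\<Sum>i\<in>I. measure (M p) (B p i)) \<le> measure (M p) (space (M p) - (\<Union>i\<in>I. B p i))"
    for p
  proof -
    interpret prob_space "M p" by (rule prob)
    have U: "(\<Union>i\<in>I. B p i) \<in> sets (M p)" using sets fin by auto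
    have "measure (M p) (\<Union>i\<in>I. B p i) \<le> (\<Sum>i\<in>I. measure (M p) (B p i))"
      by (rule finite_measure_subadditive_finite[OF fin]) (use sets in auto)
    then show ?thesis using prob_compl[OF U] by simp
  qed
  have upper: "measure (M p) (space (M p) - (\<Union>i\<in>I. B p i)) \<le> 1" for p
    using prob_space.prob_le_1[OF prob] .
  have "(\<lambda>p. \<Sum>i\<in>I. measure (M p) (B p i)) \<longlonglongrightarrow> 0"
    by (rule tendsto_null_sum) (rule lim)
  from tendsto_diff[OF tendsto_const this, of 1]
  have lower_lim: "(\<lambda>p. 1 - (\<Sum>i\<in>I. measure (M p) (B p i))) \<longlonglongrightarrow> 1" by simp
  show ?thesis
    by (rule tendsto_sandwich[OF always_eventually always_eventually lower_lim tendsto_const])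
       (use lower upper in auto)
qed

section \<open>Projections of noise columns and column contrasts\<close>

definition noise_proj :: "nat \<Rightarrow> (nat \<Rightarrow> real) \<Rightarrow> nat \<Rightarrow> (nat \<times> nat \<Rightarrow> real) \<Rightarrow> real" where
  "noise_proj n c j W = (\<Sum>k=1..n. c k * W (k, j))"

text \<open>Contribution of data column j to the difference of squared row norms of two rows
  whose signal coefficients are \<alpha>, \<gamma> and whose design columns are ca, cb.\<close>
definition col_contrast :: "nat \<Rightarrow> real \<Rightarrow> real \<Rightarrow> (nat \<Rightarrow> real) \<Rightarrow> (nat \<Rightarrow> real) \<Rightarrow> real
    \<Rightarrow> nat \<Rightarrow> (nat \<times> nat \<Rightarrow> real) \<Rightarrow> real" where
  "col_contrast n \<alpha> \<gamma> ca cb \<beta> j W = (\<alpha> * \<beta> + noise_proj n ca j W)\<^sup>2 - (\<gamma> * \<beta> + noise_proj n cb j W)\<^sup>2"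

lemma noise_proj_diff:
  "\<alpha> * noise_proj n ca j W - \<gamma> * noise_proj n cb j W = noise_proj n (\<lambda>k. \<alpha> * ca k - \<gamma> * cb k) j W"
  unfolding noise_proj_def by (simp add: sum_distrib_left algebra_simps flip: sum_subtractf)

text \<open>The contrast splits into its mean (\<alpha>^2 - \<gamma>^2) \<beta>^2, a term linear in the noise and a
  quadratic term whose mean vanishes when ca and cb have equal norms.\<close>
lemma col_contrast_split:
  "col_contrast n \<alpha> \<gamma> ca cb \<beta> j W = (\<alpha>\<^sup>2 - \<gamma>\<^sup>2) * \<beta>\<^sup>2
     + (2 * \<beta> * noise_proj n (\<lambda>k. \<alpha> * ca k - \<gamma> * cb k) j W
        + ((noise_proj n ca j W)\<^sup>2 - (noise_proj n cb j W)\<^sup>2))"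
  unfolding col_contrast_def noise_proj_diff[symmetric]
  by (simp add: power2_sum algebra_simps power2_eq_square)

lemma col_contrast_restrict:
  "col_contrast n \<alpha> \<gamma> ca cb \<beta> j (restrict W ({1..n} \<times> {j})) = col_contrast n \<alpha> \<gamma> ca cb \<beta> j W"
proof -
  have "noise_proj n c j (restrict W ({1..n} \<times> {j})) = noise_proj n c j W" for c
    unfolding noise_proj_def by (intro sum.cong refl) auto
  then show ?thesis unfolding col_contrast_def by simp
qed

lemma col_contrast_dev_bound:
  "(col_contrast n \<alpha> \<gamma> ca cb \<beta> j W - (\<alpha>\<^sup>2 - \<gamma>\<^sup>2) * \<beta>\<^sup>2)\<^sup>2
     \<le> 8 * \<beta>\<^sup>2 * (noise_proj n (\<lambda>k. \<alpha> * ca k - \<gamma> * cb k) j W)\<^sup>2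
       + 4 * (noise_proj n ca j W)^4 + 4 * (noise_proj n cb j W)^4"
proof -
  let ?L = "noise_proj n (\<lambda>k. \<alpha> * ca k - \<gamma> * cb k) j W"
  let ?a = "noise_proj n ca j W" and ?b = "noise_proj n cb j W"
  have "(col_contrast n \<alpha> \<gamma> ca cb \<beta> j W - (\<alpha>\<^sup>2 - \<gamma>\<^sup>2) * \<beta>\<^sup>2)\<^sup>2 = (2 * \<beta> * ?L + (?a\<^sup>2 - ?b\<^sup>2))\<^sup>2"
    by (simp add: col_contrast_split)
  also have "\<dots> \<le> 2 * (2 * \<beta> * ?L)\<^sup>2 + 2 * (?a\<^sup>2 + - ?b\<^sup>2)\<^sup>2"
    using sq_add_le by simp
  also have "(?a\<^sup>2 + - ?b\<^sup>2)\<^sup>2 \<le> 2 * (?a\<^sup>2)\<^sup>2 + 2 * (- ?b\<^sup>2)\<^sup>2"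
    by (rule sq_add_le)
  finally show ?thesis by (simp add: power_mult_distrib)
qed

lemma noise_proj_pow4_bound:
  "(noise_proj n c j W)^4 \<le> (\<Sum>k=1..n. (c k)\<^sup>2)\<^sup>2 * (real n * (\<Sum>k=1..n. (W (k,j))^4))"
proof -
  have "(noise_proj n c j W)\<^sup>2 \<le> (\<Sum>k=1..n. (c k)\<^sup>2) * (\<Sum>k=1..n. (W (k,j))\<^sup>2)"
    unfolding noise_proj_def by (rule Cauchy_Schwarz_ineq_sum)
  then have "((noise_proj n c j W)\<^sup>2)\<^sup>2 \<le> (\<Sum>k=1..n. (c k)\<^sup>2)\<^sup>2 * (\<Sum>k=1..n. (W (k,j))\<^sup>2)\<^sup>2"
    by (metis power_mono power_mult_distrib zero_le_power2)
  also have "\<dots> \<le> (\<Sum>k=1..n. (c k)\<^sup>2)\<^sup>2 * (real n * (\<Sum>k=1..n. (W (k,j))^4))"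
  proof (rule mult_left_mono)
    have "(\<Sum>k=1..n. (W (k,j))\<^sup>2)\<^sup>2 \<le> (\<Sum>k=1..n. ((W (k,j))\<^sup>2)\<^sup>2) * card {1..n}"
      by (rule sum_squared_le_sum_of_squares)
    then show "(\<Sum>k=1..n. (W (k,j))\<^sup>2)\<^sup>2 \<le> real n * (\<Sum>k=1..n. (W (k,j))^4)"
      by (simp add: mult.commute)
  qed simp
  finally show ?thesis by simp
qed

section \<open>I.i.d. Gaussian noise\<close>

context
  fixes \<sigma> :: real
  assumes \<sigma>_pos: "\<sigma> > 0"
begin

abbreviation gauss :: "real measure" where
  "gauss \<equiv> density lborel (normal_density 0 \<sigma>)"

abbreviation noise :: "nat \<Rightarrow> nat \<Rightarrow> (nat \<times> nat \<Rightarrow> real) measure" where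
  "noise n p \<equiv> PiM ({1..n} \<times> {1..p}) (\<lambda>_. gauss)"

lemma gauss_product: "product_prob_space (\<lambda>_. gauss)"
  by (simp add: product_prob_space_def product_sigma_finite_def product_prob_space_axioms_def
      prob_space_normal_density[OF \<sigma>_pos] prob_space_imp_sigma_finite)

lemma gauss_PiM_prob: "prob_space (PiM I (\<lambda>_. gauss))"
proof -
  interpret product_prob_space "\<lambda>_. gauss" I by (rule gauss_product)
  show ?thesis by (rule P.prob_space_axioms)
qed

lemma coord_measurable: "a \<in> I \<Longrightarrow> (\<lambda>W. W a) \<in> borel_measurable (PiM I (\<lambda>_. gauss))"
  by (metis measurable_component_singleton measurable_cong_sets sets_density sets_lborel)

lemma coord_integral:
  assumes "finite I" "a \<in> I" and [measurable]: "g \<in> borel_measurable borel"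
  shows "(\<integral>W. g (W a) \<partial>PiM I (\<lambda>_. gauss)) = (\<integral>x. normal_density 0 \<sigma> x * g x \<partial>lborel)"
    and "integrable (PiM I (\<lambda>_. gauss)) (\<lambda>W. g (W a))
           \<longleftrightarrow> integrable lborel (\<lambda>x. normal_density 0 \<sigma> x * g x)"
proof -
  have m: "(\<lambda>W. W a) \<in> measurable (PiM I (\<lambda>_. gauss)) gauss"
    using assms by (intro measurable_component_singleton)
  have distr: "distr (PiM I (\<lambda>_. gauss)) gauss (\<lambda>W. W a) = gauss"
  proof -
    interpret product_prob_space "\<lambda>_. gauss" I by (rule gauss_product)
    show ?thesis by (rule PiM_component) fact
  qed
  show "(\<integral>W. g (W a) \<partial>PiM I (\<lambda>_. gauss)) = (\<integral>x. normal_density 0 \<sigma> x * g x \<partial>lborel)"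
    using integral_distr[OF m, of g, unfolded distr] by (simp add: integral_density)
  show "integrable (PiM I (\<lambda>_. gauss)) (\<lambda>W. g (W a))
          \<longleftrightarrow> integrable lborel (\<lambda>x. normal_density 0 \<sigma> x * g x)"
    using integrable_distr_eq[OF m, of g, unfolded distr] by (simp add: integrable_density)
qed

lemma coord_pow_integrable:
  "finite I \<Longrightarrow> a \<in> I \<Longrightarrow> integrable (PiM I (\<lambda>_. gauss)) (\<lambda>W. (W a) ^ k)"
  using coord_integral(2)[of I a "\<lambda>x. x ^ k"] integrable_normal_moment[OF \<sigma>_pos, of 0 k] by simp

lemma coord_integrable: "finite I \<Longrightarrow> a \<in> I \<Longrightarrow> integrable (PiM I (\<lambda>_. gauss)) (\<lambda>W. W a)"
  using coord_pow_integrable[of I a 1] by simp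

lemma coord_mean: "finite I \<Longrightarrow> a \<in> I \<Longrightarrow> (\<integral>W. W a \<partial>PiM I (\<lambda>_. gauss)) = 0"
  using coord_integral(1)[of I a "\<lambda>x. x"] integral_normal_moment_nz_1[OF \<sigma>_pos, of 0] by simp

lemma coord_second_moment:
  "finite I \<Longrightarrow> a \<in> I \<Longrightarrow> (\<integral>W. (W a)\<^sup>2 \<partial>PiM I (\<lambda>_. gauss)) = \<sigma>\<^sup>2"
  using coord_integral(1)[of I a "\<lambda>x. x\<^sup>2"] integral_normal_moment_even[OF \<sigma>_pos, of 0 1]
  by (simp add: power2_eq_square)

lemma coord_fourth_moment:
  "finite I \<Longrightarrow> a \<in> I \<Longrightarrow> (\<integral>W. (W a)^4 \<partial>PiM I (\<lambda>_. gauss)) = 3 * \<sigma>^4"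
proof -
  assume "finite I" "a \<in> I"
  have "(\<integral>x. normal_density 0 \<sigma> x * (x - 0) ^ (2 * 2) \<partial>lborel) = fact (2 * 2) / ((2 / \<sigma>\<^sup>2) ^ 2 * fact 2)"
    by (rule integral_normal_moment_even[OF \<sigma>_pos])
  also have "\<dots> = 3 * \<sigma>^4"
    using \<sigma>_pos by (simp add: fact_numeral field_simps power2_eq_square power4_eq_xxxx)
  finally show ?thesis
    using coord_integral(1)[OF \<open>finite I\<close> \<open>a \<in> I\<close>, of "\<lambda>x. x^4"] by simp
qed

lemma coord_indep:
  assumes "finite I" "I \<noteq> {}"
  shows "prob_space.indep_vars (PiM I (\<lambda>_. gauss)) (\<lambda>_. gauss) (\<lambda>a W. W a) I"
proof -
  interpret product_prob_space "\<lambda>_. gauss" I by (rule gauss_product)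
  show ?thesis
  proof (rule P.indep_vars_iff_distr_eq_PiM'[OF assms(2), THEN iffD2])
    show "random_variable gauss (\<lambda>W. W a)" if "a \<in> I" for a
      using that by (intro measurable_component_singleton)
    have "distr (PiM I (\<lambda>_. gauss)) (PiM I (\<lambda>_. gauss)) (\<lambda>x. \<lambda>a\<in>I. x a) = PiM I (\<lambda>_. gauss)"
      using distr_PiM_restrict_finite[OF assms(1) subset_refl] by (simp add: restrict_def)
    also have "\<dots> = PiM I (\<lambda>a. distr (PiM I (\<lambda>_. gauss)) gauss (\<lambda>x. x a))"
      by (intro PiM_cong refl) (simp add: PiM_component)
    finally show "distr (PiM I (\<lambda>_. gauss)) (PiM I (\<lambda>_. gauss)) (\<lambda>x. \<lambda>a\<in>I. x a)
        = PiM I (\<lambda>a. distr (PiM I (\<lambda>_. gauss)) gauss (\<lambda>x. x a))" .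
  qed
qed

lemma coord_mult_mean:
  assumes "finite I" "a \<in> I" "a' \<in> I"
  shows "(\<integral>W. W a * W a' \<partial>PiM I (\<lambda>_. gauss)) = (if a = a' then \<sigma>\<^sup>2 else 0)"
proof (cases "a = a'")
  case True then show ?thesis
    using coord_second_moment[OF assms(1,2)] by (simp add: power2_eq_square)
next
  case False
  interpret prob_space "PiM I (\<lambda>_. gauss)" by (rule gauss_PiM_prob)
  have "indep_vars (\<lambda>_. gauss) (\<lambda>a W. W a) I"
    using coord_indep assms by auto
  then have "indep_vars (\<lambda>_. borel) (\<lambda>a W. (\<lambda>x. x) (W a)) I"
    by (rule indep_vars_compose2) auto
  then have "expectation (\<lambda>W. W a * W a') = expectation (\<lambda>W. W a) * expectation (\<lambda>W. W a')"
    by (rule indep_vars_expectation_mult[OF _ assms(2,3) False])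
       (use coord_integrable[OF assms(1)] assms in auto)
  then show ?thesis using False coord_mean[OF assms(1)] assms by simp
qed

lemma noise_proj_measurable:
  "(\<And>k. k \<in> {1..n} \<Longrightarrow> (k, j) \<in> I) \<Longrightarrow> noise_proj n c j \<in> borel_measurable (PiM I (\<lambda>_. gauss))"
  unfolding noise_proj_def by (intro borel_measurable_sum borel_measurable_times borel_measurable_const coord_measurable)

context
  fixes n p j :: nat
  assumes j: "j \<in> {1..p}"
begin

interpretation N: prob_space "noise n p" by (rule gauss_PiM_prob)

lemma entry_index: "k \<in> {1..n} \<Longrightarrow> (k, j) \<in> {1..n} \<times> {1..p}"
  using j by auto

lemma noise_proj_col_measurable: "noise_proj n c j \<in> borel_measurable (noise n p)"
  by (rule noise_proj_measurable) (rule entry_index)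

lemma noise_proj_integrable: "integrable (noise n p) (noise_proj n c j)"
  unfolding noise_proj_def
  by (intro Bochner_Integration.integrable_sum integrable_mult_right coord_integrable entry_index) simp

lemma noise_proj_mean: "(\<integral>W. noise_proj n c j W \<partial>noise n p) = 0"
  unfolding noise_proj_def
  using coord_integrable[OF _ entry_index] coord_mean[OF _ entry_index]
  by (simp add: Bochner_Integration.integral_sum)

lemma entry_mult_integrable:
  "k \<in> {1..n} \<Longrightarrow> k' \<in> {1..n} \<Longrightarrow> integrable (noise n p) (\<lambda>W. W (k, j) * W (k', j))"
  by (intro N.integrable_mult_sq coord_measurable entry_index coord_pow_integrable) simp_all

lemma noise_proj_mult_mean:
  "(\<integral>W. noise_proj n c j W * noise_proj n c' j W \<partial>noise n p) = \<sigma>\<^sup>2 * (\<Sum>k=1..n. c k * c' k)"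
proof -
  have "(\<integral>W. noise_proj n c j W * noise_proj n c' j W \<partial>noise n p)
      = (\<integral>W. (\<Sum>k=1..n. \<Sum>k'=1..n. (c k * c' k') * (W (k, j) * W (k', j))) \<partial>noise n p)"
    unfolding noise_proj_def sum_product by (simp add: ac_simps)
  also have "\<dots> = (\<Sum>k=1..n. \<Sum>k'=1..n. (\<integral>W. (c k * c' k') * (W (k, j) * W (k', j)) \<partial>noise n p))"
    by (subst Bochner_Integration.integral_sum,
        (intro Bochner_Integration.integrable_sum integrable_mult_right entry_mult_integrable; simp))
       (intro sum.cong refl Bochner_Integration.integral_sum integrable_mult_right entry_mult_integrable; simp)
  also have "\<dots> = (\<Sum>k=1..n. \<Sum>k'=1..n. (c k * c' k') * (if k = k' then \<sigma>\<^sup>2 else 0))"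
  proof (intro sum.cong refl)
    fix k k' assume "k \<in> {1..n}" "k' \<in> {1..n}"
    then show "(\<integral>W. (c k * c' k') * (W (k, j) * W (k', j)) \<partial>noise n p)
        = (c k * c' k') * (if k = k' then \<sigma>\<^sup>2 else 0)"
      using coord_mult_mean[OF _ entry_index entry_index] by simp
  qed
  also have "\<dots> = \<sigma>\<^sup>2 * (\<Sum>k=1..n. c k * c' k)"
    by (simp add: if_distrib[where f="\<lambda>x. _ * x"] sum.delta sum_distrib_left ac_simps cong: if_cong)
  finally show ?thesis .
qed

lemma noise_proj_mult_integrable: "integrable (noise n p) (\<lambda>W. noise_proj n c j W * noise_proj n c' j W)"
  unfolding noise_proj_def sum_product
proof (intro Bochner_Integration.integrable_sum)
  fix k k' assume "k \<in> {1..n}" "k' \<in> {1..n}"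
  then have "integrable (noise n p) (\<lambda>W. (c k * c' k') * (W (k, j) * W (k', j)))"
    by (intro integrable_mult_right entry_mult_integrable)
  then show "integrable (noise n p) (\<lambda>W. c k * W (k, j) * (c' k' * W (k', j)))"
    by (simp add: ac_simps)
qed

lemma noise_proj_sq_integrable: "integrable (noise n p) (\<lambda>W. (noise_proj n c j W)\<^sup>2)"
  using noise_proj_mult_integrable[of c c] by (simp add: power2_eq_square)

lemma noise_proj_sq_mean: "(\<integral>W. (noise_proj n c j W)\<^sup>2 \<partial>noise n p) = \<sigma>\<^sup>2 * (\<Sum>k=1..n. (c k)\<^sup>2)"
  using noise_proj_mult_mean[of c c] by (simp add: power2_eq_square)

lemma entry_pow4_sum_integrable: "integrable (noise n p) (\<lambda>W. \<Sum>k=1..n. (W (k, j))^4)"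
  by (intro Bochner_Integration.integrable_sum coord_pow_integrable entry_index) simp

lemma noise_proj_pow4_integrable: "integrable (noise n p) (\<lambda>W. (noise_proj n c j W)^4)"
proof (rule Bochner_Integration.integrable_bound[OF _ _ AE_I2])
  show "integrable (noise n p) (\<lambda>W. (\<Sum>k=1..n. (c k)\<^sup>2)\<^sup>2 * (real n * (\<Sum>k=1..n. (W (k, j))^4)))"
    using entry_pow4_sum_integrable by simp
  show "(\<lambda>W. (noise_proj n c j W)^4) \<in> borel_measurable (noise n p)"
    using noise_proj_col_measurable by measurable
  show "norm ((noise_proj n c j W)^4)
      \<le> norm ((\<Sum>k=1..n. (c k)\<^sup>2)\<^sup>2 * (real n * (\<Sum>k=1..n. (W (k, j))^4)))" for W
    using noise_proj_pow4_bound[of n c j W] by (simp add: sum_nonneg)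
qed

text \<open>Fourth moment bound, via Cauchy-Schwarz and the Gaussian fourth moment 3\<sigma>^4.\<close>
lemma noise_proj_pow4_mean_le:
  "(\<integral>W. (noise_proj n c j W)^4 \<partial>noise n p) \<le> 3 * (real n)\<^sup>2 * \<sigma>^4 * (\<Sum>k=1..n. (c k)\<^sup>2)\<^sup>2"
proof -
  have fourth: "(\<integral>W. (\<Sum>k=1..n. (W (k, j))^4) \<partial>noise n p) = real n * (3 * \<sigma>^4)"
    using coord_pow_integrable[OF _ entry_index] coord_fourth_moment[OF _ entry_index]
    by (simp add: Bochner_Integration.integral_sum)
  have "(\<integral>W. (noise_proj n c j W)^4 \<partial>noise n p)
      \<le> (\<integral>W. (\<Sum>k=1..n. (c k)\<^sup>2)\<^sup>2 * (real n * (\<Sum>k=1..n. (W (k, j))^4)) \<partial>noise n p)"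
    by (rule integral_mono[OF noise_proj_pow4_integrable])
       (use entry_pow4_sum_integrable noise_proj_pow4_bound in auto)
  also have "\<dots> = 3 * (real n)\<^sup>2 * \<sigma>^4 * (\<Sum>k=1..n. (c k)\<^sup>2)\<^sup>2"
    using fourth by (simp add: power2_eq_square ac_simps)
  finally show ?thesis .
qed

lemma col_contrast_measurable: "col_contrast n \<alpha> \<gamma> ca cb \<beta> j \<in> borel_measurable (noise n p)"
  unfolding col_contrast_def
  using noise_proj_col_measurable[of ca] noise_proj_col_measurable[of cb] by measurable

text \<open>The centred contrast is square integrable, being dominated by moments of order
  two and four of noise projections.\<close>
lemma col_contrast_dev_sq_integrable:
  "integrable (noise n p) (\<lambda>W. (col_contrast n \<alpha> \<gamma> ca cb \<beta> j W - (\<alpha>\<^sup>2 - \<gamma>\<^sup>2) * \<beta>\<^sup>2)\<^sup>2)"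
proof (rule Bochner_Integration.integrable_bound[OF _ _ AE_I2])
  show "integrable (noise n p) (\<lambda>W. 8 * \<beta>\<^sup>2 * (noise_proj n (\<lambda>k. \<alpha> * ca k - \<gamma> * cb k) j W)\<^sup>2
      + 4 * (noise_proj n ca j W)^4 + 4 * (noise_proj n cb j W)^4)"
    using noise_proj_sq_integrable noise_proj_pow4_integrable by auto
  show "(\<lambda>W. (col_contrast n \<alpha> \<gamma> ca cb \<beta> j W - (\<alpha>\<^sup>2 - \<gamma>\<^sup>2) * \<beta>\<^sup>2)\<^sup>2) \<in> borel_measurable (noise n p)"
    using col_contrast_measurable by measurable
qed (use col_contrast_dev_bound in auto)

lemma col_contrast_sq_integrable: "integrable (noise n p) (\<lambda>W. (col_contrast n \<alpha> \<gamma> ca cb \<beta> j W)\<^sup>2)"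
proof -
  have "integrable (noise n p) (\<lambda>W. ((col_contrast n \<alpha> \<gamma> ca cb \<beta> j W - (\<alpha>\<^sup>2 - \<gamma>\<^sup>2) * \<beta>\<^sup>2)
      + (\<alpha>\<^sup>2 - \<gamma>\<^sup>2) * \<beta>\<^sup>2)\<^sup>2)"
    by (rule N.integrable_sq_add)
       (use col_contrast_measurable col_contrast_dev_sq_integrable N.integrable_const in auto)
  then show ?thesis by simp
qed

lemma col_contrast_integrable: "integrable (noise n p) (col_contrast n \<alpha> \<gamma> ca cb \<beta> j)"
  by (rule N.square_integrable_imp_integrable[OF col_contrast_measurable col_contrast_sq_integrable])

lemma col_contrast_mean:
  assumes "(\<Sum>k=1..n. (ca k)\<^sup>2) = (\<Sum>k=1..n. (cb k)\<^sup>2)"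
  shows "N.expectation (col_contrast n \<alpha> \<gamma> ca cb \<beta> j) = (\<alpha>\<^sup>2 - \<gamma>\<^sup>2) * \<beta>\<^sup>2"
proof -
  let ?L = "noise_proj n (\<lambda>k. \<alpha> * ca k - \<gamma> * cb k) j"
  let ?Q = "\<lambda>W. (noise_proj n ca j W)\<^sup>2 - (noise_proj n cb j W)\<^sup>2"
  have iL: "integrable (noise n p) (\<lambda>W. 2 * \<beta> * ?L W)" using noise_proj_integrable by simp
  have iQ: "integrable (noise n p) ?Q" using noise_proj_sq_integrable by simp
  have mL: "(\<integral>W. 2 * \<beta> * ?L W \<partial>noise n p) = 0" using noise_proj_mean by simp
  have mQ: "(\<integral>W. ?Q W \<partial>noise n p) = 0"
    using noise_proj_sq_integrable noise_proj_sq_mean assms by simp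
  have one: "measure (noise n p) (space (noise n p)) = 1" by (rule N.prob_space)
  show ?thesis
    unfolding col_contrast_split
    using Bochner_Integration.integral_add[OF N.integrable_const Bochner_Integration.integrable_add[OF iL iQ]]
      Bochner_Integration.integral_add[OF iL iQ] mL mQ one
    by simp
qed

lemma col_contrast_variance_le:
  assumes "(\<Sum>k=1..n. (ca k)\<^sup>2) = (\<Sum>k=1..n. (cb k)\<^sup>2)"
  shows "N.variance (col_contrast n \<alpha> \<gamma> ca cb \<beta> j)
     \<le> 8 * \<sigma>\<^sup>2 * (\<Sum>k=1..n. (\<alpha> * ca k - \<gamma> * cb k)\<^sup>2) * \<beta>\<^sup>2
       + 12 * (real n)\<^sup>2 * \<sigma>^4 * ((\<Sum>k=1..n. (ca k)\<^sup>2)\<^sup>2 + (\<Sum>k=1..n. (cb k)\<^sup>2)\<^sup>2)"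
proof -
  let ?L = "noise_proj n (\<lambda>k. \<alpha> * ca k - \<gamma> * cb k) j"
  have "N.variance (col_contrast n \<alpha> \<gamma> ca cb \<beta> j)
      = (\<integral>W. (col_contrast n \<alpha> \<gamma> ca cb \<beta> j W - (\<alpha>\<^sup>2 - \<gamma>\<^sup>2) * \<beta>\<^sup>2)\<^sup>2 \<partial>noise n p)"
    by (simp only: col_contrast_mean[OF assms])
  also have "\<dots> \<le> (\<integral>W. 8 * \<beta>\<^sup>2 * (?L W)\<^sup>2 + 4 * (noise_proj n ca j W)^4
      + 4 * (noise_proj n cb j W)^4 \<partial>noise n p)"
    using col_contrast_dev_sq_integrable noise_proj_sq_integrable noise_proj_pow4_integrable
      col_contrast_dev_bound by (intro integral_mono) auto
  also have "\<dots> = 8 * \<beta>\<^sup>2 * (\<integral>W. (?L W)\<^sup>2 \<partial>noise n p) + 4 * (\<integral>W. (noise_proj n ca j W)^4 \<partial>noise n p)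
      + 4 * (\<integral>W. (noise_proj n cb j W)^4 \<partial>noise n p)"
    using noise_proj_sq_integrable noise_proj_pow4_integrable by simp
  also have "\<dots> \<le> 8 * \<beta>\<^sup>2 * (\<sigma>\<^sup>2 * (\<Sum>k=1..n. (\<alpha> * ca k - \<gamma> * cb k)\<^sup>2))
      + 4 * (3 * (real n)\<^sup>2 * \<sigma>^4 * (\<Sum>k=1..n. (ca k)\<^sup>2)\<^sup>2)
      + 4 * (3 * (real n)\<^sup>2 * \<sigma>^4 * (\<Sum>k=1..n. (cb k)\<^sup>2)\<^sup>2)"
    using noise_proj_sq_mean[of "\<lambda>k. \<alpha> * ca k - \<gamma> * cb k"]
    by (intro add_mono mult_left_mono noise_proj_pow4_mean_le) simp_all
  also have "\<dots> = 8 * \<sigma>\<^sup>2 * (\<Sum>k=1..n. (\<alpha> * ca k - \<gamma> * cb k)\<^sup>2) * \<beta>\<^sup>2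
       + 12 * (real n)\<^sup>2 * \<sigma>^4 * ((\<Sum>k=1..n. (ca k)\<^sup>2)\<^sup>2 + (\<Sum>k=1..n. (cb k)\<^sup>2)\<^sup>2)"
    by (simp only: distrib_left mult_ac)
  finally show ?thesis .
qed

end

text \<open>Distinct data columns involve disjoint sets of noise entries, hence the column
  contrasts are independent.\<close>
lemma col_contrasts_indep:
  assumes "n \<ge> 1" "p \<ge> 1"
  shows "prob_space.indep_vars (noise n p) (\<lambda>_. borel) (\<lambda>j. col_contrast n \<alpha> \<gamma> ca cb (b j) j) {1..p}"
proof -
  interpret prob_space "noise n p" by (rule gauss_PiM_prob)
  have "{1..n} \<times> {1..p} \<noteq> {}" using assms by auto
  then have "indep_vars (\<lambda>_. gauss) (\<lambda>a W. W a) ({1..n} \<times> {1..p})"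
    by (intro coord_indep) simp_all
  then have "indep_vars (\<lambda>j. PiM ({1..n} \<times> {j}) (\<lambda>_. gauss))
      (\<lambda>j W. restrict (\<lambda>a. W a) ({1..n} \<times> {j})) {1..p}"
    by (rule indep_vars_restrict) (auto simp: disjoint_family_on_def)
  then have "indep_vars (\<lambda>_. borel)
      (\<lambda>j W. col_contrast n \<alpha> \<gamma> ca cb (b j) j (restrict (\<lambda>a. W a) ({1..n} \<times> {j}))) {1..p}"
  proof (rule indep_vars_compose2)
    fix j assume "j \<in> {1..p}"
    have "noise_proj n c j \<in> borel_measurable (PiM ({1..n} \<times> {j}) (\<lambda>_. gauss))" for c
      by (rule noise_proj_measurable) auto
    from this[of ca] this[of cb] show "col_contrast n \<alpha> \<gamma> ca cb (b j) j \<in> borel_measurable (PiM ({1..n} \<times> {j}) (\<lambda>_. gauss))"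
      unfolding col_contrast_def by measurable
  qed
  then show ?thesis by (simp only: col_contrast_restrict)
qed

text \<open>Chebyshev bound for the event that the total contrast over p columns is not
  positive: its mean is (\<alpha>^2 - \<gamma>^2) S with S = \<Sum>j b_j^2, its variance at most A S + B p.\<close>
lemma contrast_sum_tail:
  assumes "n \<ge> 1" "p \<ge> 1"
    and norms: "(\<Sum>k=1..n. (ca k)\<^sup>2) = (\<Sum>k=1..n. (cb k)\<^sup>2)"
    and pos: "(\<alpha>\<^sup>2 - \<gamma>\<^sup>2) * (\<Sum>j=1..p. (b j)\<^sup>2) > 0"
  shows "measure (noise n p)
      {W \<in> space (noise n p). (\<Sum>j=1..p. col_contrast n \<alpha> \<gamma> ca cb (b j) j W) \<le> 0}
    \<le> (8 * \<sigma>\<^sup>2 * (\<Sum>k=1..n. (\<alpha> * ca k - \<gamma> * cb k)\<^sup>2) * (\<Sum>j=1..p. (b j)\<^sup>2)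
        + 12 * (real n)\<^sup>2 * \<sigma>^4 * ((\<Sum>k=1..n. (ca k)\<^sup>2)\<^sup>2 + (\<Sum>k=1..n. (cb k)\<^sup>2)\<^sup>2) * real p)
      / ((\<alpha>\<^sup>2 - \<gamma>\<^sup>2) * (\<Sum>j=1..p. (b j)\<^sup>2))\<^sup>2"
proof -
  interpret prob_space "noise n p" by (rule gauss_PiM_prob)
  define A where "A = 8 * \<sigma>\<^sup>2 * (\<Sum>k=1..n. (\<alpha> * ca k - \<gamma> * cb k)\<^sup>2)"
  define B where "B = 12 * (real n)\<^sup>2 * \<sigma>^4 * ((\<Sum>k=1..n. (ca k)\<^sup>2)\<^sup>2 + (\<Sum>k=1..n. (cb k)\<^sup>2)\<^sup>2)"
  define D where "D j = col_contrast n \<alpha> \<gamma> ca cb (b j) j" for j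
  define f where "f W = (\<Sum>j=1..p. D j W)" for W
  have f_meas: "f \<in> borel_measurable (noise n p)"
    unfolding f_def D_def using col_contrast_measurable by (intro borel_measurable_sum) auto
  have D_sq: "integrable (noise n p) (\<lambda>W. (D j W)\<^sup>2)" if "j \<in> {1..p}" for j
    unfolding D_def using col_contrast_sq_integrable[OF that] .
  have f_sq: "integrable (noise n p) (\<lambda>W. (f W)\<^sup>2)"
    unfolding f_def
    by (rule integrable_sq_sum) (use D_sq col_contrast_measurable in \<open>auto simp: D_def\<close>)
  have f_mean: "expectation f = (\<alpha>\<^sup>2 - \<gamma>\<^sup>2) * (\<Sum>j=1..p. (b j)\<^sup>2)"
    unfolding f_def D_def
    using col_contrast_integrable col_contrast_mean[OF _ norms]
    by (simp add: Bochner_Integration.integral_sum sum_distrib_left)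
  have "variance f = (\<Sum>j=1..p. variance (D j))"
    unfolding f_def
    by (rule variance_sum_indep[OF _ _ D_sq]) (use col_contrasts_indep[OF assms(1,2)] in \<open>auto simp: D_def\<close>)
  also have "\<dots> \<le> (\<Sum>j=1..p. A * (b j)\<^sup>2 + B)"
    unfolding D_def A_def B_def by (intro sum_mono col_contrast_variance_le norms) simp
  also have "\<dots> = A * (\<Sum>j=1..p. (b j)\<^sup>2) + B * real p"
    by (simp add: sum.distrib sum_distrib_left)
  finally have f_var: "variance f \<le> A * (\<Sum>j=1..p. (b j)\<^sup>2) + B * real p" .
  have "prob {W \<in> space (noise n p). f W \<le> 0} \<le> variance f / (expectation f)\<^sup>2"
    by (rule prob_nonpos_le_variance[OF f_meas f_sq]) (use f_mean pos in simp)
  also have "\<dots> \<le> (A * (\<Sum>j=1..p. (b j)\<^sup>2) + B * real p) / (expectation f)\<^sup>2"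
    by (intro divide_right_mono f_var) simp
  finally show ?thesis
    unfolding f_mean unfolding f_def D_def A_def B_def .
qed

end

section \<open>Geometry of the weighted centred design\<close>

lemma sum_step_function:
  assumes "m \<le> n"
  shows "(\<Sum>k=1..n. if k \<le> m then A else B) = real m * A + real (n - m) * (B::real)"
proof -
  have "{1..n} \<inter> {k. k \<le> m} = {1..m}" "{1..n} \<inter> - {k. k \<le> m} = {m+1..n}"
    using assms by auto
  then show ?thesis by (simp add: sum.If_cases)
qed

lemma Xbar_col_sq_sum:
  assumes "i \<le> n"
  shows "(\<Sum>k=1..n. (Xbar n d k i)\<^sup>2) = (d i)\<^sup>2 * real i * (real n - real i) / real n"
proof -
  have "(\<Sum>k=1..n. (Xbar n d k i)\<^sup>2)
      = (\<Sum>k=1..n. if k \<le> i then ((real i / real n - 1) * d i)\<^sup>2 else ((real i / real n) * d i)\<^sup>2)"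
    by (intro sum.cong refl) (simp add: Xbar_def)
  also have "\<dots> = real i * ((real i / real n - 1) * d i)\<^sup>2 + real (n - i) * ((real i / real n) * d i)\<^sup>2"
    by (rule sum_step_function[OF assms])
  also have "\<dots> = (d i)\<^sup>2 * real i * (real n - real i) / real n"
    using assms by (cases "n = 0") (simp_all add: of_nat_diff field_simps power2_eq_square)
  finally show ?thesis .
qed

lemma Xbar_col_inner:
  assumes "a < c" "c \<le> n"
  shows "(\<Sum>k=1..n. Xbar n d k a * Xbar n d k c) = d a * d c * real a * (real n - real c) / real n"
proof -
  define A1 where "A1 = (real a / real n - 1) * d a"
  define A2 where "A2 = (real a / real n) * d a"
  define B1 where "B1 = (real c / real n - 1) * d c"
  define B2 where "B2 = (real c / real n) * d c"
  have "(\<Sum>k=1..n. Xbar n d k a * Xbar n d k c)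
      = (\<Sum>k=1..n. (if k \<le> a then A1 * B1 else A2 * B1) + (if k \<le> c then 0 else A2 * B2 - A2 * B1))"
    by (intro sum.cong refl) (use assms in \<open>auto simp: Xbar_def A1_def A2_def B1_def B2_def\<close>)
  also have "\<dots> = (real a * (A1 * B1) + real (n - a) * (A2 * B1)) + (real c * 0 + real (n - c) * (A2 * B2 - A2 * B1))"
    unfolding sum.distrib using assms by (simp only: sum_step_function less_imp_le order.trans)
  also have "\<dots> = d a * d c * real a * (real n - real c) / real n"
    using assms unfolding A1_def A2_def B1_def B2_def
    by (cases "n = 0") (simp_all add: of_nat_diff field_simps power2_eq_square)
  finally show ?thesis .
qed

lemma gfl_weight_sq:
  "1 \<le> i \<Longrightarrow> i < n \<Longrightarrow> (gfl_weight n i)\<^sup>2 = real n / (real i * (real n - real i))"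
  unfolding gfl_weight_def by (simp add: of_nat_less_iff[symmetric])

lemma gfl_col_unit:
  assumes "i \<in> {1..n-1}"
  shows "(\<Sum>k=1..n. (Xbar n (gfl_weight n) k i)\<^sup>2) = 1"
proof -
  have i: "1 \<le> i" "i < n" using assms by auto
  then show ?thesis
    unfolding Xbar_col_sq_sum[OF less_imp_le[OF i(2)]] gfl_weight_sq[OF i] by (simp add: field_simps)
qed

text \<open>Distinct normalised columns have squared correlation a (n - c) / ((n - a) c) < 1.\<close>
lemma gfl_col_corr_lt_ordered:
  assumes "a \<in> {1..n-1}" "c \<in> {1..n-1}" "a < c"
  shows "(\<Sum>k=1..n. Xbar n (gfl_weight n) k a * Xbar n (gfl_weight n) k c)\<^sup>2 < 1"
proof -
  have a: "1 \<le> a" "a < n" and c: "1 \<le> c" "c < n" using assms by auto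
  have "(\<Sum>k=1..n. Xbar n (gfl_weight n) k a * Xbar n (gfl_weight n) k c)\<^sup>2
     = (gfl_weight n a)\<^sup>2 * (gfl_weight n c)\<^sup>2 * (real a)\<^sup>2 * (real n - real c)\<^sup>2 / (real n)\<^sup>2"
    unfolding Xbar_col_inner[OF assms(3) less_imp_le[OF c(2)]] by (simp add: power_mult_distrib power_divide)
  also have "\<dots> = (real a * (real n - real c)) / ((real n - real a) * real c)"
  proof -
    have cancel: "m / (x * P) * (m / (y * Q)) * x\<^sup>2 * Q\<^sup>2 / m\<^sup>2 = x * Q / (P * y)"
      if "x > 0" "y > 0" "m > 0" "P > 0" "Q > 0" for x y m P Q :: real
      using that by (simp add: field_simps power2_eq_square)
    show ?thesis unfolding gfl_weight_sq[OF a] gfl_weight_sq[OF c] using a c by (intro cancel) auto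
  qed
  also have "\<dots> < 1"
  proof (subst divide_less_eq_1_pos)
    show "0 < (real n - real a) * real c" using a c by simp
    have "real a * real n < real c * real n" using assms a by (simp add: mult_strict_right_mono)
    then show "real a * (real n - real c) < (real n - real a) * real c" by (simp add: algebra_simps)
  qed
  finally show ?thesis .
qed

lemma gfl_col_corr_lt:
  assumes "i \<in> {1..n-1}" "u \<in> {1..n-1}" "i \<noteq> u"
  shows "(\<Sum>k=1..n. Xbar n (gfl_weight n) k i * Xbar n (gfl_weight n) k u)\<^sup>2 < 1"
proof (cases "i < u")
  case True then show ?thesis using gfl_col_corr_lt_ordered[OF assms(1,2)] by simp
next
  case False
  then have "u < i" using assms(3) by simp
  then show ?thesis using gfl_col_corr_lt_ordered[OF assms(2,1)] by (simp add: mult.commute)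
qed

lemma XtY_Ybar:
  assumes "u \<in> {1..n-1}"
  shows "XtY n d (Ybar n d u b W) i j
    = (\<Sum>k=1..n. Xbar n d k i * Xbar n d k u) * b j + noise_proj n (\<lambda>k. Xbar n d k i) j W"
proof -
  have Y: "Ybar n d u b W k j = Xbar n d k u * b j + W (k, j)" for k
    unfolding Ybar_def using assms by (simp add: if_distrib[where f="\<lambda>x. _ * x"] sum.delta cong: if_cong)
  show ?thesis
    unfolding XtY_def Y noise_proj_def by (simp add: distrib_left sum.distrib sum_distrib_right mult.assoc)
qed

text \<open>The gap |Z_u|^2 - |Z_i|^2 between the squared norms of rows u and i of Xbar^T Ybar,
  written as a sum of column contrasts.\<close>
definition row_gap :: "nat \<Rightarrow> nat \<Rightarrow> (nat \<Rightarrow> real) \<Rightarrow> (nat \<Rightarrow> real) \<Rightarrow> nat \<Rightarrow> nat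
    \<Rightarrow> (nat \<times> nat \<Rightarrow> real) \<Rightarrow> real" where
  "row_gap n p d b u i W = (\<Sum>j=1..p. col_contrast n (\<Sum>k=1..n. Xbar n d k u * Xbar n d k u)
     (\<Sum>k=1..n. Xbar n d k i * Xbar n d k u) (\<lambda>k. Xbar n d k u) (\<lambda>k. Xbar n d k i) (b j) j W)"

lemma row_norm_less_iff_row_gap:
  assumes "u \<in> {1..n-1}"
  shows "row_norm_XtY n p d (Ybar n d u b W) i < row_norm_XtY n p d (Ybar n d u b W) u
    \<longleftrightarrow> 0 < row_gap n p d b u i W"
  unfolding row_norm_XtY_def real_sqrt_less_iff XtY_Ybar[OF assms] row_gap_def col_contrast_def
  by (simp add: sum_subtractf)

section \<open>Asymptotics and the main theorem\<close>

text \<open>If S_p / p tends to a positive limit, then (A S_p + B p) / (c S_p)^2 = O(1/p), so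
  probabilities bounded by it tend to zero.\<close>
lemma second_moment_bound_tendsto_zero:
  fixes S P :: "nat \<Rightarrow> real"
  assumes lim: "(\<lambda>p. S p / real p) \<longlonglongrightarrow> s" and "s > 0" and "c \<noteq> 0"
    and nonneg: "\<And>p. 0 \<le> P p"
    and bound: "\<And>p. p \<ge> 1 \<Longrightarrow> S p > 0 \<Longrightarrow> P p \<le> (A * S p + B * real p) / (c * S p)\<^sup>2"
  shows "P \<longlonglongrightarrow> 0"
proof -
  define g where "g p = (A * (S p / real p) + B) / (c\<^sup>2 * (S p / real p)\<^sup>2) * (1 / real p)" for p
  have "g \<longlonglongrightarrow> (A * s + B) / (c\<^sup>2 * s\<^sup>2) * 0"
    unfolding g_def by (intro tendsto_intros lim lim_1_over_n) (use assms in simp)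
  then have g_lim: "g \<longlonglongrightarrow> 0" by simp
  have "eventually (\<lambda>p. p \<ge> 1 \<and> S p / real p > 0) sequentially"
    using eventually_ge_at_top[of 1] order_tendstoD(1)[OF lim \<open>s > 0\<close>] by eventually_elim auto
  then have "eventually (\<lambda>p. P p \<le> g p) sequentially"
  proof eventually_elim
    case (elim p)
    then have p: "real p > 0" and S: "S p > 0" by (auto simp: zero_less_divide_iff)
    have "(A * S p + B * real p) / (c * S p)\<^sup>2 = g p"
      unfolding g_def using p S \<open>c \<noteq> 0\<close> by (simp add: field_simps power2_eq_square)
    with bound[OF _ S] elim show ?case by simp
  qed
  then show ?thesis
    by (intro tendsto_sandwich[OF _ _ tendsto_const g_lim]) (auto simp: nonneg)
qed

lemma competitor_tendsto_zero:
  fixes n u i :: nat and \<sigma> \<beta>sq :: real and b :: "nat \<Rightarrow> real"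
  assumes u: "u \<in> {1..n-1}" and i: "i \<in> {1..n-1}" "i \<noteq> u" and \<sigma>: "\<sigma> > 0"
    and lim: "(\<lambda>p. (\<Sum>j=1..p. (b j)\<^sup>2) / real p) \<longlonglongrightarrow> \<beta>sq" and \<beta>: "\<beta>sq > 0"
  defines "w \<equiv> gfl_weight n"
  shows "(\<lambda>p. measure (noise_measure n p \<sigma>)
            {W \<in> space (noise_measure n p \<sigma>). row_gap n p w b u i W \<le> 0}) \<longlonglongrightarrow> 0"
    (is "?P \<longlonglongrightarrow> 0")
proof (rule second_moment_bound_tendsto_zero[OF lim \<beta>])
  define \<gamma> where "\<gamma> = (\<Sum>k=1..n. Xbar n w k i * Xbar n w k u)"
  have norm_u: "(\<Sum>k=1..n. (Xbar n w k u)\<^sup>2) = 1" and norm_i: "(\<Sum>k=1..n. (Xbar n w k i)\<^sup>2) = 1"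
    unfolding w_def using gfl_col_unit u i by auto
  then have \<alpha>: "(\<Sum>k=1..n. Xbar n w k u * Xbar n w k u) = 1" by (simp add: power2_eq_square)
  have gap: "1 - \<gamma>\<^sup>2 > 0" unfolding \<gamma>_def w_def using gfl_col_corr_lt[OF i(1) u i(2)] by simp
  then show "1 - \<gamma>\<^sup>2 \<noteq> 0" by simp
  show "0 \<le> ?P p" for p by simp
  have n: "n \<ge> 1" using u by auto
  show "?P p \<le> (8 * \<sigma>\<^sup>2 * (\<Sum>k=1..n. (1 * Xbar n w k u - \<gamma> * Xbar n w k i)\<^sup>2) * (\<Sum>j=1..p. (b j)\<^sup>2)
      + 12 * (real n)\<^sup>2 * \<sigma>^4 * (1\<^sup>2 + 1\<^sup>2) * real p) / ((1 - \<gamma>\<^sup>2) * (\<Sum>j=1..p. (b j)\<^sup>2))\<^sup>2"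
    if "p \<ge> 1" "(\<Sum>j=1..p. (b j)\<^sup>2) > 0" for p
    using contrast_sum_tail[OF \<sigma> n that(1) norm_u[unfolded norm_i[symmetric]], of 1 \<gamma> b] gap that
    unfolding noise_measure_def row_gap_def \<alpha> \<gamma>_def[symmetric] norm_u norm_i by simp
qed

theorem theorem2:
  fixes n u :: nat and \<sigma> \<beta>sq :: real and b :: "nat \<Rightarrow> real"
  assumes "n \<ge> 2" and "u \<in> {1..n-1}" and "\<sigma> > 0"
    and "(\<lambda>p. (\<Sum>j=1..p. (b j)\<^sup>2) / real p) \<longlonglongrightarrow> \<beta>sq" and "\<beta>sq > 0"
  shows "(\<lambda>p. measure (noise_measure n p \<sigma>)
            {W \<in> space (noise_measure n p \<sigma>).
               first_cp_is n p (gfl_weight n) (Ybar n (gfl_weight n) u b W) u})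
         \<longlonglongrightarrow> 1"
proof -
  define w where "w = gfl_weight n"
  define Lose where "Lose p i = {W \<in> space (noise_measure n p \<sigma>). row_gap n p w b u i W \<le> 0}" for p i
  have good: "{W \<in> space (noise_measure n p \<sigma>). first_cp_is n p w (Ybar n w u b W) u}
      = space (noise_measure n p \<sigma>) - (\<Union>i\<in>{1..n-1} - {u}. Lose p i)" for p
    unfolding first_cp_is_def Lose_def row_norm_less_iff_row_gap[OF assms(2)] by auto
  have "Lose p i \<in> sets (noise_measure n p \<sigma>)" for p i
    unfolding Lose_def noise_measure_def row_gap_def
    using col_contrast_measurable[OF assms(3)] by measurable
  moreover have "(\<lambda>p. measure (noise_measure n p \<sigma>) (Lose p i)) \<longlonglongrightarrow> 0" if "i \<in> {1..n-1} - {u}" for i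
    unfolding Lose_def w_def using competitor_tendsto_zero[OF assms(2) _ _ assms(3,4,5)] that by auto
  ultimately show ?thesis
    unfolding w_def[symmetric] good
    by (intro union_bound_tendsto) (auto simp: noise_measure_def intro: gauss_PiM_prob[OF assms(3)])
qed

end
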